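(* Let $n\ge2$ and $k\ge1$ be integers, $(S^n,g_0)$ the round unit sphere in $\mathbb{R}^{n+1}$, and $x$ a first spherical harmonic, i.e. the restriction to $S^n$ of a linear function on $\mathbb{R}^{n+1}$. Let $X=\nabla x$ be its $g_0$-gradient. Then for all $u\in C^\infty(S^n)$, \[ L_{2k}(xu) - xL_{2k}u = k\Bigl((n+2k-2)\,x\,L_{2k-2}u - 2\,X\bigl(L_{2k-2}u\bigr)\Bigr), \] where $X(f)$ denotes the derivative of $f$ along $X$.
   Context: $\Delta$ is the (nonpositive) Laplacian of $g_0$; for an integer $m\ge1$, $L_{2m}:=\prod_{j=1}^m\bigl(-\Delta+\tfrac{(n-2j)(n+2j-2)}{4}\bigr)$, and $L_0$ is the identity. *)

theory Defs
  imports "HOL-Analysis.Analysis"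
begin

definition dirder :: "real^'n::finite \<Rightarrow> (real^'n \<Rightarrow> real) \<Rightarrow> real^'n \<Rightarrow> real" where
  "dirder v f y = frechet_derivative f (at y) v"

fun iter_dirder :: "(real^'n::finite) list \<Rightarrow> (real^'n \<Rightarrow> real) \<Rightarrow> real^'n \<Rightarrow> real" where
  "iter_dirder [] f = f"
| "iter_dirder (v # vs) f = dirder v (iter_dirder vs f)"

definition smooth_on :: "(real^'n::finite) set \<Rightarrow> (real^'n \<Rightarrow> real) \<Rightarrow> bool" where
  "smooth_on S f \<longleftrightarrow> (\<forall>vs. iter_dirder vs f differentiable_on S)"

definition eucl_lap :: "(real^'n::finite \<Rightarrow> real) \<Rightarrow> real^'n \<Rightarrow> real" where
  "eucl_lap f y = (\<Sum>i\<in>UNIV. dirder (axis i 1) (dirder (axis i 1) f) y)"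

text \<open>A function on the unit sphere S^n (given by its values there) is extended
  0-homogeneously to R^(n+1) - {0}.\<close>
definition hom_ext :: "(real^'n::finite \<Rightarrow> real) \<Rightarrow> real^'n \<Rightarrow> real" where
  "hom_ext u y = u (y /\<^sub>R norm y)"

definition smooth_on_sphere :: "(real^'n::finite \<Rightarrow> real) \<Rightarrow> bool" where
  "smooth_on_sphere u \<longleftrightarrow> smooth_on (- {0}) (hom_ext u)"

text \<open>The (nonpositive) Laplace-Beltrami operator of the round metric g_0 on S^n:
  the Euclidean Laplacian of the 0-homogeneous extension, evaluated on S^n
  (only values on the sphere are meaningful).\<close>
definition sph_lap :: "(real^'n::finite \<Rightarrow> real) \<Rightarrow> real^'n \<Rightarrow> real" where
  "sph_lap u p = eucl_lap (hom_ext u) p"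

text \<open>L_{2m} = prod_{j=1..m} (-Delta + (n-2j)(n+2j-2)/4), L_0 = id.\<close>
fun GJMS :: "nat \<Rightarrow> nat \<Rightarrow> (real^'n::finite \<Rightarrow> real) \<Rightarrow> real^'n \<Rightarrow> real" where
  "GJMS n 0 u = u"
| "GJMS n (Suc m) u = (\<lambda>p. - sph_lap (GJMS n m u) p
      + ((real n - 2 * real (Suc m)) * (real n + 2 * real (Suc m) - 2) / 4) * GJMS n m u p)"

text \<open>Derivative of f along the g_0-gradient X of the first spherical harmonic
  x(p) = a . p, at a point p of S^n; X(p) = a - (a . p) p.\<close>
definition grad_deriv :: "real^'n::finite \<Rightarrow> (real^'n \<Rightarrow> real) \<Rightarrow> real^'n \<Rightarrow> real" where
  "grad_deriv a f p = dirder (a - (a \<bullet> p) *\<^sub>R p) (hom_ext f) p"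

end

theory Submission
  imports Defs
begin

text \<open>Extend every function f on S^n 0-homogeneously to a function F on R^(n+1) - {0}. On the
  sphere the Laplace-Beltrami operator is the Euclidean Laplacian of F, and X f is the derivative
  of F in the constant direction a, where x(p) = a . p: the radial part of X(p) = a - (a . p) p
  does not contribute, by Euler's identity. As x f and X f extend to |z|^-1 (a . z) F(z) and
  |z| dF(z)(a), the product rule, Euler's identity and the symmetry of second derivatives give the
  commutation relations
    Delta (x f) = x Delta f - n x f + 2 X f,   Delta (X f) = X Delta f - 2 x Delta f + (n - 2) X f.
  The formula follows from these by induction on k, since L_(2k+2) = (-Delta + c) L_(2k) with
  c = (n - 2k - 2)(n + 2k) / 4.\<close>

section \<open>Directional derivatives\<close>

lemma dirder_eqI:
  assumes "(F has_derivative F') (at y)"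
  shows "dirder v F y = F' v"
  using assms unfolding dirder_def by (simp add: frechet_derivative_at[symmetric])

lemma has_derivative_dirder:
  assumes "F differentiable (at y)"
  shows "(F has_derivative (\<lambda>v. dirder v F y)) (at y)"
  using assms unfolding dirder_def by (simp add: frechet_derivative_works[symmetric])

lemma linear_dirder: "F differentiable (at y) \<Longrightarrow> linear (\<lambda>v. dirder v F y)"
  using has_derivative_dirder has_derivative_linear by blast

lemma dirder_cong:
  assumes "open S" "y \<in> S" "\<And>z. z \<in> S \<Longrightarrow> F z = G z"
  shows "dirder v F y = dirder v G y"
proof -
  have "(F has_derivative f') (at y) \<longleftrightarrow> (G has_derivative f') (at y)" for f'
    using has_derivative_transform_within_open[OF _ assms(1,2)] assms(3) by metis
  then show ?thesis unfolding dirder_def frechet_derivative_def by simp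
qed

lemma dirder_direction_diff:
  assumes "F differentiable (at y)"
  shows "dirder (a - c *\<^sub>R b) F y = dirder a F y - c * dirder b F y"
  using linear_diff[OF linear_dirder[OF assms]] linear_scale[OF linear_dirder[OF assms]]
  by simp

lemma dirder_basis_expansion:
  assumes "F differentiable (at y)"
  shows "dirder v F y = (\<Sum>i\<in>UNIV. (v \<bullet> axis i 1) * dirder (axis i 1) F y)"
proof -
  have "dirder v F y = dirder (\<Sum>i\<in>UNIV. v $ i *\<^sub>R axis i 1) F y"
    by (simp only: basis_expansion[of v, unfolded scalar_mult_eq_scaleR])
  also have "\<dots> = (\<Sum>i\<in>UNIV. v $ i * dirder (axis i 1) F y)"
    by (simp add: linear_sum[OF linear_dirder[OF assms]] linear_scale[OF linear_dirder[OF assms]])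
  finally show ?thesis by (simp add: inner_axis)
qed

lemma dirder_add:
  assumes "F differentiable (at y)" "G differentiable (at y)"
  shows "dirder v (\<lambda>z. F z + G z) y = dirder v F y + dirder v G y"
  by (rule dirder_eqI) (intro has_derivative_add has_derivative_dirder assms)

lemma dirder_cmult:
  assumes "F differentiable (at y)"
  shows "dirder v (\<lambda>z. c * F z) y = c * dirder v F y"
  by (rule dirder_eqI) (intro has_derivative_mult_right has_derivative_dirder assms)

lemma dirder_lincomb:
  assumes "F differentiable (at y)" "G differentiable (at y)"
  shows "dirder v (\<lambda>z. \<alpha> * F z + \<beta> * G z) y = \<alpha> * dirder v F y + \<beta> * dirder v G y"
  by (rule dirder_eqI) (intro has_derivative_add has_derivative_mult_right has_derivative_dirder assms)

lemma dirder_mult: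
  assumes "F differentiable (at y)" "G differentiable (at y)"
  shows "dirder v (\<lambda>z. F z * G z) y = F y * dirder v G y + dirder v F y * G y"
  by (rule dirder_eqI) (intro has_derivative_mult has_derivative_dirder assms)

lemma dirder_power:
  assumes "F differentiable (at y)"
  shows "dirder v (\<lambda>z. F z ^ k) y = real k * dirder v F y * F y ^ (k - 1)"
  using dirder_eqI[OF has_derivative_power[OF has_derivative_dirder[OF assms], of k]] by simp

lemma dirder_sum:
  assumes "finite I" "\<And>i. i \<in> I \<Longrightarrow> F i differentiable (at y)"
  shows "dirder v (\<lambda>z. \<Sum>i\<in>I. F i z) y = (\<Sum>i\<in>I. dirder v (F i) y)"
  by (rule dirder_eqI) (intro has_derivative_sum has_derivative_dirder assms)

lemma dirder_const: "dirder v (\<lambda>z. c) y = 0"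
  by (rule dirder_eqI) simp

lemma dirder_inner: "dirder v (\<lambda>z. a \<bullet> z) y = a \<bullet> v"
  by (rule dirder_eqI) (intro has_derivative_inner_right has_derivative_ident)

lemma dirder_self_inner: "dirder v (\<lambda>z. z \<bullet> z) y = 2 * (v \<bullet> y)"
proof -
  have "((\<lambda>z. z \<bullet> z) has_derivative (\<lambda>v. y \<bullet> v + v \<bullet> y)) (at y)"
    by (intro has_derivative_inner has_derivative_ident)
  from dirder_eqI[OF this] show ?thesis by (simp add: inner_commute)
qed

lemma has_derivative_inverse_norm:
  fixes y :: "'a::real_inner"
  assumes "y \<noteq> 0"
  shows "((\<lambda>z. inverse (norm z)) has_derivative (\<lambda>v. - (y \<bullet> v) * inverse (norm y) ^ 3)) (at y)"
proof -
  have "((\<lambda>z. inverse (norm z)) has_derivative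
      (\<lambda>v. - (inverse (norm y) * (v \<bullet> sgn y) * inverse (norm y)))) (at y)"
    by (rule Deriv.has_derivative_inverse[OF _ has_derivative_norm[OF assms]]) (use assms in simp)
  moreover have "inverse (norm y) * (v \<bullet> sgn y) * inverse (norm y) = (y \<bullet> v) * inverse (norm y) ^ 3" for v
    using assms by (simp add: sgn_div_norm inner_commute power3_eq_cube divide_inverse)
  ultimately show ?thesis by simp
qed

lemma dirder_inverse_norm:
  "y \<noteq> 0 \<Longrightarrow> dirder v (\<lambda>z. inverse (norm z)) y = - (y \<bullet> v) * inverse (norm y) ^ 3"
  using dirder_eqI[OF has_derivative_inverse_norm] by simp

lemma dirder_norm:
  assumes "y \<noteq> 0"
  shows "dirder v norm y = (y \<bullet> v) / norm y"
  using dirder_eqI[OF has_derivative_norm[OF assms]] assms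
  by (simp add: sgn_div_norm inner_commute divide_inverse)

lemma has_real_derivative_dirder_line:
  assumes "F differentiable (at (y + s *\<^sub>R u))"
  shows "((\<lambda>s. F (y + s *\<^sub>R u)) has_real_derivative dirder u F (y + s *\<^sub>R u)) (at s)"
proof -
  have "((\<lambda>s. y + s *\<^sub>R u) has_derivative (\<lambda>h. h *\<^sub>R u)) (at s)"
    by (auto intro!: derivative_eq_intros)
  from has_derivative_compose[OF this has_derivative_dirder[OF assms]]
  have "((\<lambda>s. F (y + s *\<^sub>R u)) has_derivative (\<lambda>h. dirder (h *\<^sub>R u) F (y + s *\<^sub>R u))) (at s)" .
  moreover have "(\<lambda>h. dirder (h *\<^sub>R u) F (y + s *\<^sub>R u)) = (*) (dirder u F (y + s *\<^sub>R u))"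
    using linear_scale[OF linear_dirder[OF assms]] by (simp add: fun_eq_iff mult.commute)
  ultimately show ?thesis by (simp add: has_field_derivative_def mult.commute)
qed

lemma dirder_compose_scaleR:
  assumes "F differentiable (at (t *\<^sub>R y))"
  shows "dirder v (\<lambda>z. F (t *\<^sub>R z)) y = t * dirder v F (t *\<^sub>R y)"
proof -
  have "((\<lambda>z. t *\<^sub>R z) has_derivative (\<lambda>h. t *\<^sub>R h)) (at y)"
    by (auto intro!: derivative_eq_intros)
  from dirder_eqI[OF has_derivative_compose[OF this has_derivative_dirder[OF assms]]]
  show ?thesis using linear_scale[OF linear_dirder[OF assms]] by simp
qed

section \<open>Smoothness of finite order\<close>

text \<open>Closure properties of \<^const>\<open>smooth_on\<close> are proved by induction on the order.\<close>

definition smooth_upto :: "(real^'n::finite) set \<Rightarrow> nat \<Rightarrow> (real^'n \<Rightarrow> real) \<Rightarrow> bool" where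
  "smooth_upto S m F \<longleftrightarrow> (\<forall>vs. length vs \<le> m \<longrightarrow> iter_dirder vs F differentiable_on S)"

lemma smooth_on_iff_smooth_upto: "smooth_on S F \<longleftrightarrow> (\<forall>m. smooth_upto S m F)"
  unfolding smooth_on_def smooth_upto_def by (meson order_refl)

lemma iter_dirder_append_single: "iter_dirder (vs @ [v]) F = iter_dirder vs (dirder v F)"
  by (induction vs) simp_all

lemma smooth_upto_0: "smooth_upto S 0 F \<longleftrightarrow> F differentiable_on S"
  unfolding smooth_upto_def by auto

lemma smooth_upto_Suc:
  "smooth_upto S (Suc m) F \<longleftrightarrow> F differentiable_on S \<and> (\<forall>v. smooth_upto S m (dirder v F))"
proof
  assume F: "smooth_upto S (Suc m) F"
  have "smooth_upto S m (dirder v F)" for v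
    unfolding smooth_upto_def
  proof (intro allI impI)
    fix vs :: "(real^'a) list"
    assume "length vs \<le> m"
    then show "iter_dirder vs (dirder v F) differentiable_on S"
      using F[unfolded smooth_upto_def, rule_format, of "vs @ [v]"]
      by (simp add: iter_dirder_append_single)
  qed
  moreover have "F differentiable_on S"
    using F[unfolded smooth_upto_def, rule_format, of "[]"] by simp
  ultimately show "F differentiable_on S \<and> (\<forall>v. smooth_upto S m (dirder v F))" by blast
next
  assume F: "F differentiable_on S \<and> (\<forall>v. smooth_upto S m (dirder v F))"
  show "smooth_upto S (Suc m) F" unfolding smooth_upto_def
  proof (intro allI impI)
    fix vs :: "(real^'a) list"
    assume "length vs \<le> Suc m"
    then show "iter_dirder vs F differentiable_on S"
      using F by (cases vs rule: rev_cases) (auto simp: smooth_upto_def iter_dirder_append_single)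
  qed
qed

lemma smooth_upto_dirder: "smooth_upto S (Suc m) F \<Longrightarrow> smooth_upto S m (dirder v F)"
  using smooth_upto_Suc by blast

lemma smooth_upto_mono: "smooth_upto S m F \<Longrightarrow> k \<le> m \<Longrightarrow> smooth_upto S k F"
  unfolding smooth_upto_def by auto

lemma smooth_upto_differentiable:
  assumes "smooth_upto S m F" "open S" "y \<in> S"
  shows "F differentiable (at y)"
  using smooth_upto_mono[OF assms(1), of 0] assms(2,3)
  by (simp add: smooth_upto_0 differentiable_on_eq_differentiable_at)

lemma iter_dirder_cong:
  assumes "open S" "\<And>z. z \<in> S \<Longrightarrow> F z = G z" "z \<in> S"
  shows "iter_dirder vs F z = iter_dirder vs G z"
  using assms(3)
proof (induction vs arbitrary: z)
  case Nil
  then show ?case using assms(2) by simp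
next
  case (Cons v vs)
  show ?case unfolding iter_dirder.simps
    by (rule dirder_cong[OF assms(1) Cons.prems Cons.IH])
qed

lemma differentiable_on_cong:
  assumes "F differentiable_on S" "open S" "\<And>z. z \<in> S \<Longrightarrow> F z = G z"
  shows "G differentiable_on S"
  unfolding differentiable_on_eq_differentiable_at[OF assms(2)]
proof
  fix z
  assume z: "z \<in> S"
  then obtain F' where "(F has_derivative F') (at z)"
    using assms(1,2) differentiable_on_eq_differentiable_at differentiable_def by blast
  then have "(G has_derivative F') (at z)"
    by (rule has_derivative_transform_within_open[OF _ assms(2) z]) (simp add: assms(3))
  then show "G differentiable (at z)" unfolding differentiable_def by blast
qed

lemma smooth_upto_cong:
  assumes "smooth_upto S m F" "open S" "\<And>z. z \<in> S \<Longrightarrow> F z = G z"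
  shows "smooth_upto S m G"
  unfolding smooth_upto_def
proof (intro allI impI)
  fix vs :: "(real^'a) list"
  assume "length vs \<le> m"
  with assms(1) have "iter_dirder vs F differentiable_on S" unfolding smooth_upto_def by blast
  then show "iter_dirder vs G differentiable_on S"
    by (rule differentiable_on_cong[OF _ assms(2) iter_dirder_cong[OF assms(2,3)]])
qed

lemma smooth_upto_const: "smooth_upto S m (\<lambda>z. c)"
proof (induction m arbitrary: c)
  case 0
  then show ?case by (simp add: smooth_upto_0)
next
  case (Suc m)
  have "dirder v (\<lambda>z. c) = (\<lambda>z. 0)" for v :: "real^'a"
    by (simp add: fun_eq_iff dirder_const)
  then show ?case by (simp add: smooth_upto_Suc Suc.IH)
qed

lemma smooth_upto_inner: "smooth_upto S m (\<lambda>z. a \<bullet> z)"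
proof -
  have "(\<lambda>z. a \<bullet> z) differentiable_on S"
    using has_derivative_inner_right[OF has_derivative_ident]
    by (auto simp: differentiable_on_def differentiable_def)
  moreover have "dirder v (\<lambda>z. a \<bullet> z) = (\<lambda>z. a \<bullet> v)" for v :: "real^'a"
    by (simp add: fun_eq_iff dirder_inner)
  ultimately show ?thesis
    by (cases m) (simp_all add: smooth_upto_0 smooth_upto_Suc smooth_upto_const)
qed

lemma smooth_upto_self_inner: "smooth_upto S m (\<lambda>z. z \<bullet> z)"
proof -
  have "(\<lambda>z. z \<bullet> z) differentiable_on S"
    using has_derivative_inner[OF has_derivative_ident has_derivative_ident]
    by (auto simp: differentiable_on_def differentiable_def)
  moreover have "dirder v (\<lambda>z. z \<bullet> z) = (\<lambda>z. 2 * (v \<bullet> z))" for v :: "real^'a"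
    by (simp add: fun_eq_iff dirder_self_inner)
  moreover have "smooth_upto S k (\<lambda>z. 2 * (v \<bullet> z))" for k v
    using smooth_upto_inner[of S k "2 *\<^sub>R v"] by simp
  ultimately show ?thesis
    by (cases m) (simp_all add: smooth_upto_0 smooth_upto_Suc)
qed

lemma smooth_upto_add:
  assumes "open S"
  shows "smooth_upto S m F \<Longrightarrow> smooth_upto S m G \<Longrightarrow> smooth_upto S m (\<lambda>z. F z + G z)"
proof (induction m arbitrary: F G)
  case 0
  then show ?case by (simp add: smooth_upto_0)
next
  case (Suc m)
  have "smooth_upto S m (dirder v (\<lambda>z. F z + G z))" for v
  proof (rule smooth_upto_cong[OF _ assms])
    show "smooth_upto S m (\<lambda>z. dirder v F z + dirder v G z)"
      using Suc by (simp add: smooth_upto_Suc)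
    show "dirder v F z + dirder v G z = dirder v (\<lambda>z. F z + G z) z" if "z \<in> S" for z
      using Suc.prems smooth_upto_differentiable assms that by (metis dirder_add)
  qed
  with Suc.prems show ?case by (simp add: smooth_upto_Suc)
qed

lemma smooth_upto_mult:
  assumes "open S"
  shows "smooth_upto S m F \<Longrightarrow> smooth_upto S m G \<Longrightarrow> smooth_upto S m (\<lambda>z. F z * G z)"
proof (induction m arbitrary: F G)
  case 0
  then show ?case by (simp add: smooth_upto_0)
next
  case (Suc m)
  have "smooth_upto S m (dirder v (\<lambda>z. F z * G z))" for v
  proof (rule smooth_upto_cong[OF _ assms])
    have "smooth_upto S m F" "smooth_upto S m G"
      using Suc.prems smooth_upto_mono le_SucI by blast+
    moreover have "smooth_upto S m (dirder v F)" "smooth_upto S m (dirder v G)"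
      using Suc.prems smooth_upto_dirder by blast+
    ultimately show "smooth_upto S m (\<lambda>z. F z * dirder v G z + dirder v F z * G z)"
      by (intro smooth_upto_add[OF assms] Suc.IH)
    show "F z * dirder v G z + dirder v F z * G z = dirder v (\<lambda>z. F z * G z) z" if "z \<in> S" for z
      using Suc.prems smooth_upto_differentiable assms that by (metis dirder_mult)
  qed
  with Suc.prems show ?case by (simp add: smooth_upto_Suc)
qed

lemma smooth_upto_cmult: "open S \<Longrightarrow> smooth_upto S m F \<Longrightarrow> smooth_upto S m (\<lambda>z. c * F z)"
  using smooth_upto_mult[OF _ smooth_upto_const] by blast

lemma smooth_upto_sum:
  assumes "open S" "finite I" "\<And>i. i \<in> I \<Longrightarrow> smooth_upto S m (F i)"
  shows "smooth_upto S m (\<lambda>z. \<Sum>i\<in>I. F i z)"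
  using assms(2,3)
  by (induction I rule: finite_induct) (simp_all add: smooth_upto_const smooth_upto_add[OF assms(1)])

lemma smooth_upto_inverse_norm:
  assumes "open S" "0 \<notin> S"
  shows "smooth_upto S m (\<lambda>z. inverse (norm z))"
proof (induction m)
  case 0
  show ?case
    using assms has_derivative_inverse_norm
    by (metis smooth_upto_0 differentiableI differentiable_on_eq_differentiable_at)
next
  case (Suc m)
  have "smooth_upto S m (dirder v (\<lambda>z. inverse (norm z)))" for v
  proof (rule smooth_upto_cong[OF _ assms(1)])
    show "smooth_upto S m (\<lambda>z. ((- v) \<bullet> z) * (inverse (norm z) * (inverse (norm z) * inverse (norm z))))"
      using Suc by (intro smooth_upto_mult[OF assms(1)] smooth_upto_inner)
    show "((- v) \<bullet> z) * (inverse (norm z) * (inverse (norm z) * inverse (norm z)))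
        = dirder v (\<lambda>z. inverse (norm z)) z" if "z \<in> S" for z
      using that assms(2) dirder_inverse_norm[of z v]
      by (cases "z = 0") (auto simp: power3_eq_cube inner_commute)
  qed
  with smooth_upto_mono[OF Suc, of 0] show ?case by (simp add: smooth_upto_Suc smooth_upto_0)
qed

lemma smooth_upto_norm:
  assumes "open S" "0 \<notin> S"
  shows "smooth_upto S m norm"
proof (rule smooth_upto_cong[OF _ assms(1)])
  show "smooth_upto S m (\<lambda>z. (z \<bullet> z) * inverse (norm z))"
    by (intro smooth_upto_mult smooth_upto_self_inner smooth_upto_inverse_norm assms)
  show "(z \<bullet> z) * inverse (norm z) = norm z" if "z \<in> S" for z
    using that assms(2) by (cases "z = 0") (auto simp: dot_square_norm power2_eq_square)
qed

lemma smooth_on_differentiable: "smooth_on S F \<Longrightarrow> open S \<Longrightarrow> p \<in> S \<Longrightarrow> F differentiable (at p)"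
  using smooth_upto_differentiable smooth_on_iff_smooth_upto by blast

lemma smooth_on_differentiable_on: "smooth_on S F \<Longrightarrow> F differentiable_on S"
  using smooth_on_iff_smooth_upto smooth_upto_0 by blast

lemma smooth_on_dirder: "smooth_on S F \<Longrightarrow> smooth_on S (dirder v F)"
  using smooth_on_iff_smooth_upto smooth_upto_dirder by blast

lemma smooth_on_cong:
  "smooth_on S F \<Longrightarrow> open S \<Longrightarrow> (\<And>z. z \<in> S \<Longrightarrow> F z = G z) \<Longrightarrow> smooth_on S G"
  using smooth_on_iff_smooth_upto smooth_upto_cong by blast

lemma smooth_on_add: "open S \<Longrightarrow> smooth_on S F \<Longrightarrow> smooth_on S G \<Longrightarrow> smooth_on S (\<lambda>z. F z + G z)"
  using smooth_on_iff_smooth_upto smooth_upto_add by blast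

lemma smooth_on_mult: "open S \<Longrightarrow> smooth_on S F \<Longrightarrow> smooth_on S G \<Longrightarrow> smooth_on S (\<lambda>z. F z * G z)"
  using smooth_on_iff_smooth_upto smooth_upto_mult by blast

lemma smooth_on_cmult: "open S \<Longrightarrow> smooth_on S F \<Longrightarrow> smooth_on S (\<lambda>z. c * F z)"
  using smooth_on_iff_smooth_upto smooth_upto_cmult by blast

lemma smooth_on_sum:
  "open S \<Longrightarrow> finite I \<Longrightarrow> (\<And>i. i \<in> I \<Longrightarrow> smooth_on S (F i)) \<Longrightarrow> smooth_on S (\<lambda>z. \<Sum>i\<in>I. F i z)"
  using smooth_on_iff_smooth_upto smooth_upto_sum by metis

lemma smooth_on_inner: "smooth_on S (\<lambda>z. a \<bullet> z)"
  using smooth_on_iff_smooth_upto smooth_upto_inner by blast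

lemma smooth_on_self_inner: "smooth_on S (\<lambda>z. z \<bullet> z)"
  using smooth_on_iff_smooth_upto smooth_upto_self_inner by blast

lemma smooth_on_inverse_norm: "open S \<Longrightarrow> 0 \<notin> S \<Longrightarrow> smooth_on S (\<lambda>z. inverse (norm z))"
  using smooth_on_iff_smooth_upto smooth_upto_inverse_norm by blast

lemma smooth_on_norm: "open S \<Longrightarrow> 0 \<notin> S \<Longrightarrow> smooth_on S norm"
  using smooth_on_iff_smooth_upto smooth_upto_norm by blast

section \<open>Symmetry of second directional derivatives\<close>

lemma second_difference_mean_value:
  fixes G :: "real^'n::finite \<Rightarrow> real"
  assumes h: "0 < h"
    and G: "\<And>s t. 0 \<le> s \<Longrightarrow> s \<le> h \<Longrightarrow> 0 \<le> t \<Longrightarrow> t \<le> h \<Longrightarrow>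
      G differentiable (at (p + s *\<^sub>R w + t *\<^sub>R u))"
    and G': "\<And>s t. 0 \<le> s \<Longrightarrow> s \<le> h \<Longrightarrow> 0 \<le> t \<Longrightarrow> t \<le> h \<Longrightarrow>
      dirder w G differentiable (at (p + s *\<^sub>R w + t *\<^sub>R u))"
  obtains s t where "0 < s" "s < h" "0 < t" "t < h"
    and "G (p + h *\<^sub>R u + h *\<^sub>R w) - G (p + h *\<^sub>R u) - G (p + h *\<^sub>R w) + G p
      = h\<^sup>2 * dirder u (dirder w G) (p + s *\<^sub>R w + t *\<^sub>R u)"
proof -
  define \<phi> where "\<phi> = (\<lambda>s. G ((p + h *\<^sub>R u) + s *\<^sub>R w) - G (p + s *\<^sub>R w))"
  have "\<exists>s. 0 < s \<and> s < h \<and> \<phi> h - \<phi> 0 = (h - 0) *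
      (dirder w G ((p + h *\<^sub>R u) + s *\<^sub>R w) - dirder w G (p + s *\<^sub>R w))"
    unfolding \<phi>_def
  proof (rule MVT2[OF h])
    fix s
    assume s: "0 \<le> s" "s \<le> h"
    have "G differentiable (at ((p + h *\<^sub>R u) + s *\<^sub>R w))"
      using G[OF s, of h] h by (simp add: algebra_simps)
    moreover have "G differentiable (at (p + s *\<^sub>R w))"
      using G[OF s, of 0] h by simp
    ultimately show "((\<lambda>s. G ((p + h *\<^sub>R u) + s *\<^sub>R w) - G (p + s *\<^sub>R w)) has_real_derivative
        dirder w G ((p + h *\<^sub>R u) + s *\<^sub>R w) - dirder w G (p + s *\<^sub>R w)) (at s)"
      by (intro DERIV_diff has_real_derivative_dirder_line)
  qed
  then obtain s where s: "0 < s" "s < h" and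
    s_eq: "\<phi> h - \<phi> 0 = h * (dirder w G ((p + h *\<^sub>R u) + s *\<^sub>R w) - dirder w G (p + s *\<^sub>R w))"
    by auto
  define \<psi> where "\<psi> = (\<lambda>t. dirder w G ((p + s *\<^sub>R w) + t *\<^sub>R u))"
  have "\<exists>t. 0 < t \<and> t < h \<and> \<psi> h - \<psi> 0 = (h - 0) * dirder u (dirder w G) ((p + s *\<^sub>R w) + t *\<^sub>R u)"
    unfolding \<psi>_def
    by (rule MVT2[OF h], rule has_real_derivative_dirder_line, rule G') (use s in auto)
  then obtain t where t: "0 < t" "t < h" and
    t_eq: "\<psi> h - \<psi> 0 = h * dirder u (dirder w G) ((p + s *\<^sub>R w) + t *\<^sub>R u)"
    by auto
  have "G (p + h *\<^sub>R u + h *\<^sub>R w) - G (p + h *\<^sub>R u) - G (p + h *\<^sub>R w) + G p = \<phi> h - \<phi> 0"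
    unfolding \<phi>_def by simp
  also have "\<dots> = h * (\<psi> h - \<psi> 0)"
    unfolding s_eq \<psi>_def by (simp add: algebra_simps)
  also have "\<dots> = h\<^sup>2 * dirder u (dirder w G) (p + s *\<^sub>R w + t *\<^sub>R u)"
    unfolding t_eq by (simp add: power2_eq_square)
  finally show ?thesis using that s t by blast
qed

lemma parallelogram_in_ball:
  fixes p :: "'a::real_normed_vector"
  assumes "0 < m"
  obtains \<delta> where "0 < \<delta>"
    and "\<And>h s t. 0 \<le> s \<Longrightarrow> s \<le> h \<Longrightarrow> 0 \<le> t \<Longrightarrow> t \<le> h \<Longrightarrow> h < \<delta> \<Longrightarrow>
      p + s *\<^sub>R w + t *\<^sub>R u \<in> ball p m"
proof
  define c where "c = norm u + norm w + 1"
  have c: "0 < c" unfolding c_def by (simp add: add_nonneg_pos)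
  then show "0 < m / c" using assms by simp
  fix h s t :: real
  assume st: "0 \<le> s" "s \<le> h" "0 \<le> t" "t \<le> h" and h: "h < m / c"
  have "dist (p + s *\<^sub>R w + t *\<^sub>R u) p \<le> s * norm w + t * norm u"
    using st norm_triangle_ineq[of "s *\<^sub>R w" "t *\<^sub>R u"] by (simp add: dist_norm)
  also have "\<dots> \<le> h * norm w + h * norm u"
    using st by (intro add_mono mult_right_mono) auto
  also have "\<dots> \<le> h * c"
    unfolding c_def using st by (simp add: algebra_simps)
  also have "\<dots> < m" using h c by (simp add: pos_less_divide_eq)
  finally show "p + s *\<^sub>R w + t *\<^sub>R u \<in> ball p m" by (simp add: dist_commute)
qed

lemma second_difference_approx:
  fixes G :: "real^'n::finite \<Rightarrow> real"
  assumes S: "open S" "p \<in> S" and G: "smooth_upto S 2 G" and e: "0 < e"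
  shows "\<exists>\<delta>>0. \<forall>h. 0 < h \<and> h < \<delta> \<longrightarrow>
    \<bar>(G (p + h *\<^sub>R u + h *\<^sub>R w) - G (p + h *\<^sub>R u) - G (p + h *\<^sub>R w) + G p)
      - h\<^sup>2 * dirder u (dirder w G) p\<bar> \<le> e * h\<^sup>2"
proof -
  define A where "A = dirder u (dirder w G)"
  have G1: "smooth_upto S 1 (dirder w G)"
    using smooth_upto_dirder[of S 1 G] G by (simp add: numeral_2_eq_2)
  have "continuous_on S A"
    using smooth_upto_dirder[OF G1[unfolded One_nat_def]] unfolding A_def smooth_upto_0
    by (rule differentiable_imp_continuous_on)
  then have "continuous (at p) A" using S continuous_on_eq_continuous_at by blast
  then obtain d where d: "d > 0" "\<And>x. dist x p < d \<Longrightarrow> \<bar>A x - A p\<bar> < e"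
    using e unfolding continuous_at_eps_delta dist_real_def by blast
  obtain r where r: "r > 0" "ball p r \<subseteq> S" using S open_contains_ball by blast
  obtain \<delta> where \<delta>: "\<delta> > 0" and near: "\<And>h s t. 0 \<le> s \<Longrightarrow> s \<le> h \<Longrightarrow> 0 \<le> t \<Longrightarrow> t \<le> h
      \<Longrightarrow> h < \<delta> \<Longrightarrow> p + s *\<^sub>R w + t *\<^sub>R u \<in> ball p (min d r)"
    using parallelogram_in_ball[of "min d r" p w u] d r by (metis min_less_iff_conj)
  have "\<bar>(G (p + h *\<^sub>R u + h *\<^sub>R w) - G (p + h *\<^sub>R u) - G (p + h *\<^sub>R w) + G p)
      - h\<^sup>2 * A p\<bar> \<le> e * h\<^sup>2" if h: "0 < h" "h < \<delta>" for h
  proof -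
    have inS: "p + s *\<^sub>R w + t *\<^sub>R u \<in> S" if "0 \<le> s" "s \<le> h" "0 \<le> t" "t \<le> h" for s t
      using near[of s h t] that h r(2) by auto
    obtain s t where st: "0 < s" "s < h" "0 < t" "t < h"
      and eq: "G (p + h *\<^sub>R u + h *\<^sub>R w) - G (p + h *\<^sub>R u) - G (p + h *\<^sub>R w) + G p
        = h\<^sup>2 * A (p + s *\<^sub>R w + t *\<^sub>R u)"
      unfolding A_def
      by (rule second_difference_mean_value[OF h(1)])
        (use inS smooth_upto_differentiable[OF G S(1)] smooth_upto_differentiable[OF G1 S(1)] in blast)+
    have "\<bar>A (p + s *\<^sub>R w + t *\<^sub>R u) - A p\<bar> \<le> e"
      using d(2) near[of s h t] st h by (simp add: dist_commute less_imp_le)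
    then have "h\<^sup>2 * \<bar>A (p + s *\<^sub>R w + t *\<^sub>R u) - A p\<bar> \<le> e * h\<^sup>2"
      by (metis mult.commute mult_right_mono zero_le_power2)
    then show ?thesis
      unfolding eq by (simp add: abs_mult right_diff_distrib[symmetric])
  qed
  with \<delta> show ?thesis unfolding A_def by blast
qed

lemma dirder_commute:
  fixes G :: "real^'n::finite \<Rightarrow> real"
  assumes "open S" "p \<in> S" "smooth_upto S 2 G"
  shows "dirder u (dirder w G) p = dirder w (dirder u G) p"
proof (rule ccontr)
  define A where "A = dirder u (dirder w G) p"
  define B where "B = dirder w (dirder u G) p"
  assume "dirder u (dirder w G) p \<noteq> dirder w (dirder u G) p"
  then have e: "\<bar>A - B\<bar> / 4 > 0" unfolding A_def B_def by simp
  obtain d1 where d1: "d1 > 0" "\<And>h. 0 < h \<and> h < d1 \<Longrightarrow>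
    \<bar>(G (p + h *\<^sub>R u + h *\<^sub>R w) - G (p + h *\<^sub>R u) - G (p + h *\<^sub>R w) + G p) - h\<^sup>2 * A\<bar>
      \<le> \<bar>A - B\<bar> / 4 * h\<^sup>2"
    using second_difference_approx[OF assms e, of u w] unfolding A_def by blast
  obtain d2 where d2: "d2 > 0" "\<And>h. 0 < h \<and> h < d2 \<Longrightarrow>
    \<bar>(G (p + h *\<^sub>R w + h *\<^sub>R u) - G (p + h *\<^sub>R w) - G (p + h *\<^sub>R u) + G p) - h\<^sup>2 * B\<bar>
      \<le> \<bar>A - B\<bar> / 4 * h\<^sup>2"
    using second_difference_approx[OF assms e, of w u] unfolding B_def by blast
  define h where "h = min d1 d2 / 2"
  have h: "0 < h" "h < d1" "h < d2" unfolding h_def using d1 d2 by auto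
  define D where "D = G (p + h *\<^sub>R u + h *\<^sub>R w) - G (p + h *\<^sub>R u) - G (p + h *\<^sub>R w) + G p"
  have "\<bar>D - h\<^sup>2 * A\<bar> \<le> \<bar>A - B\<bar> / 4 * h\<^sup>2" using d1(2)[of h] h unfolding D_def by simp
  moreover have "\<bar>D - h\<^sup>2 * B\<bar> \<le> \<bar>A - B\<bar> / 4 * h\<^sup>2"
    using d2(2)[of h] h unfolding D_def by (simp add: algebra_simps)
  ultimately have "h\<^sup>2 * \<bar>A - B\<bar> \<le> h\<^sup>2 * (\<bar>A - B\<bar> / 2)"
    by (simp add: abs_le_iff abs_if algebra_simps split: if_splits)
  then show False using h e by simp
qed

section \<open>Homogeneous functions\<close>

definition homogeneous :: "real \<Rightarrow> (real^'n::finite \<Rightarrow> real) \<Rightarrow> bool" where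
  "homogeneous d F \<longleftrightarrow> (\<forall>y t. y \<noteq> 0 \<longrightarrow> t > 0 \<longrightarrow> F (t *\<^sub>R y) = t powr d * F y)"

lemma homogeneousD: "homogeneous d F \<Longrightarrow> y \<noteq> 0 \<Longrightarrow> t > 0 \<Longrightarrow> F (t *\<^sub>R y) = t powr d * F y"
  unfolding homogeneous_def by blast

lemma homogeneous_normalize:
  "homogeneous d F \<Longrightarrow> y \<noteq> 0 \<Longrightarrow> F (y /\<^sub>R norm y) = inverse (norm y) powr d * F y"
  using homogeneousD[of d F y "inverse (norm y)"] by simp

lemma homogeneous_hom_ext: "homogeneous 0 (hom_ext f)"
  unfolding homogeneous_def hom_ext_def
proof (intro allI impI)
  fix y :: "real^'a" and t :: real
  assume "y \<noteq> 0" "t > 0"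
  then have "inverse (norm (t *\<^sub>R y)) * t = inverse (norm y)" by simp
  then have "(t *\<^sub>R y) /\<^sub>R norm (t *\<^sub>R y) = y /\<^sub>R norm y" by (simp only: scaleR_scaleR)
  moreover have "t powr 0 = 1" using \<open>t > 0\<close> by simp
  ultimately show "f ((t *\<^sub>R y) /\<^sub>R norm (t *\<^sub>R y)) = t powr 0 * f (y /\<^sub>R norm y)"
    by (simp only: mult_1)
qed

lemma homogeneous_sum:
  "(\<And>i. i \<in> I \<Longrightarrow> homogeneous d (F i)) \<Longrightarrow> homogeneous d (\<lambda>z. \<Sum>i\<in>I. F i z)"
  unfolding homogeneous_def by (simp add: sum_distrib_left)

lemma homogeneous_dirder:
  fixes F :: "real^'n::finite \<Rightarrow> real"
  assumes F: "homogeneous d F" "F differentiable_on (- {0})"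
  shows "homogeneous (d - 1) (dirder v F)"
  unfolding homogeneous_def
proof (intro allI impI)
  fix y :: "real^'n" and t :: real
  assume y: "y \<noteq> 0" and t: "t > 0"
  have F_at: "F differentiable (at z)" if "z \<noteq> 0" for z
    using F(2) that differentiable_on_eq_differentiable_at[of "- {0}" F] by auto
  have "t * dirder v F (t *\<^sub>R y) = dirder v (\<lambda>z. F (t *\<^sub>R z)) y"
    using y t by (simp add: dirder_compose_scaleR F_at)
  also have "\<dots> = dirder v (\<lambda>z. t powr d * F z) y"
    by (rule dirder_cong[of "- {0}"]) (use y t F(1) homogeneousD in auto)
  also have "\<dots> = t powr d * dirder v F y"
    by (rule dirder_cmult[OF F_at[OF y]])
  finally show "dirder v F (t *\<^sub>R y) = t powr (d - 1) * dirder v F y"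
    using t by (simp add: powr_diff field_simps)
qed

lemma homogeneous_euler:
  fixes F :: "real^'n::finite \<Rightarrow> real"
  assumes "homogeneous d F" "y \<noteq> 0" "F differentiable (at y)"
  shows "dirder y F y = d * F y"
proof -
  have "((\<lambda>s. F (0 + s *\<^sub>R y)) has_real_derivative dirder y F (0 + 1 *\<^sub>R y)) (at 1)"
    by (rule has_real_derivative_dirder_line) (use assms(3) in simp)
  then have D1: "((\<lambda>s. F (s *\<^sub>R y)) has_real_derivative dirder y F y) (at 1)" by simp
  have "((\<lambda>s. s powr d * F y) has_real_derivative d * F y) (at 1)"
    using DERIV_cmult_right[OF has_real_derivative_powr[of 1 d], of "F y"] by simp
  then have D2: "((\<lambda>s. F (s *\<^sub>R y)) has_real_derivative d * F y) (at 1)"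
    by (rule has_field_derivative_transform_within_open[where S="{0<..}"])
      (auto simp: homogeneousD[OF assms(1,2)])
  show ?thesis using DERIV_unique[OF D1 D2] .
qed

section \<open>The Euclidean Laplacian\<close>

lemma eucl_lap_eq: "eucl_lap F = (\<lambda>y. \<Sum>i\<in>UNIV. dirder (axis i 1) (dirder (axis i 1) F) y)"
  by (simp add: fun_eq_iff eucl_lap_def)

lemma smooth_on_eucl_lap: "open S \<Longrightarrow> smooth_on S F \<Longrightarrow> smooth_on S (eucl_lap F)"
  unfolding eucl_lap_eq by (intro smooth_on_sum smooth_on_dirder) auto

lemma homogeneous_eucl_lap:
  fixes P :: "real^'n::finite \<Rightarrow> real"
  assumes "smooth_on (- {0}) P" "homogeneous d P"
  shows "homogeneous (d - 2) (eucl_lap P)"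
proof -
  have "homogeneous (d - 1 - 1) (dirder (axis i 1) (dirder (axis i 1) P))" for i
    by (intro homogeneous_dirder smooth_on_differentiable_on smooth_on_dirder assms)
  then show ?thesis unfolding eucl_lap_eq by (intro homogeneous_sum) simp
qed

lemma eucl_lap_cong:
  assumes "open S" "p \<in> S" "\<And>z. z \<in> S \<Longrightarrow> F z = G z"
  shows "eucl_lap F p = eucl_lap G p"
  unfolding eucl_lap_def
  by (intro sum.cong refl dirder_cong[OF assms(1,2)] dirder_cong[OF assms(1) _ assms(3)])

lemma eucl_lap_lincomb:
  assumes S: "open S" "p \<in> S" and F: "smooth_on S F" and G: "smooth_on S G"
  shows "eucl_lap (\<lambda>z. \<alpha> * F z + \<beta> * G z) p = \<alpha> * eucl_lap F p + \<beta> * eucl_lap G p"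
proof -
  have "dirder e (dirder e (\<lambda>z. \<alpha> * F z + \<beta> * G z)) p
      = dirder e (\<lambda>z. \<alpha> * dirder e F z + \<beta> * dirder e G z) p" for e
    by (rule dirder_cong[OF S])
      (rule dirder_lincomb[OF smooth_on_differentiable[OF F S(1)] smooth_on_differentiable[OF G S(1)]])
  also have "\<dots> e = \<alpha> * dirder e (dirder e F) p + \<beta> * dirder e (dirder e G) p" for e
    by (rule dirder_lincomb[OF smooth_on_differentiable[OF smooth_on_dirder[OF F] S]
          smooth_on_differentiable[OF smooth_on_dirder[OF G] S]])
  finally show ?thesis unfolding eucl_lap_def by (simp add: sum.distrib sum_distrib_left)
qed

lemma eucl_lap_mult:
  assumes S: "open S" "p \<in> S" and F: "smooth_on S F" and G: "smooth_on S G"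
  shows "eucl_lap (\<lambda>z. F z * G z) p = F p * eucl_lap G p
     + 2 * (\<Sum>i\<in>UNIV. dirder (axis i 1) F p * dirder (axis i 1) G p) + eucl_lap F p * G p"
proof -
  have "dirder e (dirder e (\<lambda>z. F z * G z)) p
      = F p * dirder e (dirder e G) p + 2 * (dirder e F p * dirder e G p) + dirder e (dirder e F) p * G p"
    for e
  proof -
    have F0: "F differentiable (at p)" and G0: "G differentiable (at p)"
      and F1: "dirder e F differentiable (at p)" and G1: "dirder e G differentiable (at p)"
      using F G S by (auto intro: smooth_on_differentiable smooth_on_dirder)
    have "dirder e (dirder e (\<lambda>z. F z * G z)) p
        = dirder e (\<lambda>z. F z * dirder e G z + dirder e F z * G z) p"
      by (rule dirder_cong[OF S])
        (rule dirder_mult[OF smooth_on_differentiable[OF F S(1)] smooth_on_differentiable[OF G S(1)]])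
    also have "\<dots> = dirder e (\<lambda>z. F z * dirder e G z) p + dirder e (\<lambda>z. dirder e F z * G z) p"
      by (rule dirder_add) (intro differentiable_mult F0 G0 F1 G1)+
    finally show ?thesis
      unfolding dirder_mult[OF F0 G1] dirder_mult[OF F1 G0] by (simp add: algebra_simps)
  qed
  then show ?thesis unfolding eucl_lap_def
    by (simp add: sum.distrib sum_distrib_left sum_distrib_right)
qed

lemma eucl_lap_inner: "eucl_lap (\<lambda>z. a \<bullet> z) p = 0"
proof -
  have "dirder v (\<lambda>z. a \<bullet> z) = (\<lambda>z. a \<bullet> v)" for v :: "real^'a"
    by (simp add: fun_eq_iff dirder_inner)
  then show ?thesis by (simp add: eucl_lap_def dirder_const)
qed

lemma eucl_lap_dirder_commute:
  assumes S: "open S" "p \<in> S" and P: "smooth_on S P"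
  shows "eucl_lap (dirder a P) p = dirder a (eucl_lap P) p"
proof -
  have P2: "smooth_on S (dirder (axis i 1) (dirder (axis i 1) P))" for i
    using P by (intro smooth_on_dirder)
  have "dirder (axis i 1) (dirder (axis i 1) (dirder a P)) p
      = dirder a (dirder (axis i 1) (dirder (axis i 1) P)) p" for i
  proof -
    have "dirder (axis i 1) (dirder (axis i 1) (dirder a P)) p
        = dirder (axis i 1) (dirder a (dirder (axis i 1) P)) p"
      by (intro dirder_cong[OF S] dirder_commute[OF S(1)])
        (use P smooth_on_iff_smooth_upto in blast)+
    also have "\<dots> = dirder a (dirder (axis i 1) (dirder (axis i 1) P)) p"
      using P smooth_on_dirder smooth_on_iff_smooth_upto by (blast intro: dirder_commute[OF S])
    finally show ?thesis .
  qed
  also have "(\<Sum>i\<in>UNIV. dirder a (dirder (axis i 1) (dirder (axis i 1) P)) p)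
      = dirder a (eucl_lap P) p"
    unfolding eucl_lap_eq
    by (rule dirder_sum[symmetric]) (auto intro: smooth_on_differentiable[OF P2 S])
  ultimately show ?thesis unfolding eucl_lap_def by simp
qed

lemma sum_square_vec_nth: "(\<Sum>i\<in>UNIV. (p $ i)\<^sup>2) = (norm (p :: real^'n::finite))\<^sup>2"
  unfolding power2_norm_eq_inner inner_vec_def by (simp add: power2_eq_square)

lemma eucl_lap_inverse_norm:
  fixes p :: "real^'n::finite"
  assumes p: "norm p = 1"
  shows "eucl_lap (\<lambda>z. inverse (norm z)) p = 3 - real CARD('n)"
proof -
  let ?r = "\<lambda>z::real^'n. inverse (norm z)"
  have p0: "p \<noteq> 0" using p by auto
  have r: "?r differentiable (at p)" using differentiableI[OF has_derivative_inverse_norm[OF p0]] .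
  have "dirder e (dirder e ?r) p = 3 * (p \<bullet> e)\<^sup>2 - e \<bullet> e" for e
  proof -
    have "dirder e (dirder e ?r) p = dirder e (\<lambda>z. ((- e) \<bullet> z) * ?r z ^ 3) p"
      by (rule dirder_cong[of "- {0}"]) (auto simp: dirder_inverse_norm inner_commute p0)
    also have "\<dots> = ((- e) \<bullet> p) * dirder e (\<lambda>z. ?r z ^ 3) p + ((- e) \<bullet> e) * ?r p ^ 3"
      unfolding dirder_mult[OF differentiable_inner[OF differentiable_const differentiable_ident]
          differentiable_power[OF r]]
        dirder_inner by (simp add: algebra_simps)
    also have "\<dots> = 3 * (p \<bullet> e)\<^sup>2 - e \<bullet> e"
      using p p0 by (simp add: dirder_power[OF r] dirder_inverse_norm inner_commute power2_eq_square)
    finally show ?thesis .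
  qed
  then show ?thesis unfolding eucl_lap_def
    using p sum_square_vec_nth[of p]
    by (simp add: sum_subtractf sum_distrib_left[symmetric] inner_axis inner_axis_axis)
qed

lemma eucl_lap_norm:
  fixes p :: "real^'n::finite"
  assumes p: "norm p = 1"
  shows "eucl_lap norm p = real CARD('n) - 1"
proof -
  let ?r = "\<lambda>z::real^'n. inverse (norm z)"
  have p0: "p \<noteq> 0" using p by auto
  have r: "?r differentiable (at p)" using differentiableI[OF has_derivative_inverse_norm[OF p0]] .
  have "dirder e (dirder e norm) p = e \<bullet> e - (p \<bullet> e)\<^sup>2" for e
  proof -
    have "dirder e (dirder e norm) p = dirder e (\<lambda>z. (e \<bullet> z) * ?r z) p"
      by (rule dirder_cong[of "- {0}"]) (auto simp: dirder_norm inner_commute divide_inverse p0)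
    also have "\<dots> = (e \<bullet> p) * dirder e ?r p + (e \<bullet> e) * ?r p"
      unfolding dirder_mult[OF differentiable_inner[OF differentiable_const differentiable_ident] r] dirder_inner
      by (simp add: algebra_simps)
    also have "\<dots> = e \<bullet> e - (p \<bullet> e)\<^sup>2"
      using p p0 by (simp add: dirder_inverse_norm inner_commute power2_eq_square)
    finally show ?thesis .
  qed
  then show ?thesis unfolding eucl_lap_def
    using p sum_square_vec_nth[of p] by (simp add: sum_subtractf inner_axis inner_axis_axis)
qed

section \<open>Functions on the sphere and their homogeneous extensions\<close>

lemma open_punctured: "open (- {0 :: real^'n::finite})"
  by auto

lemma smooth_on_sphereD: "smooth_on_sphere f \<Longrightarrow> smooth_on (- {0}) (hom_ext f)"
  by (simp add: smooth_on_sphere_def)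

lemma hom_ext_differentiable: "smooth_on_sphere f \<Longrightarrow> y \<noteq> 0 \<Longrightarrow> hom_ext f differentiable (at y)"
  using smooth_on_differentiable[OF smooth_on_sphereD open_punctured] by simp

lemma hom_ext_on_sphere: "norm p = 1 \<Longrightarrow> hom_ext f p = f p"
  by (simp add: hom_ext_def)

lemma hom_ext_cong: "(\<And>y. norm y = 1 \<Longrightarrow> f y = g y) \<Longrightarrow> z \<noteq> 0 \<Longrightarrow> hom_ext f z = hom_ext g z"
  by (simp add: hom_ext_def)

lemma hom_ext_lincomb:
  "hom_ext (\<lambda>z. \<alpha> * f z + \<beta> * g z) = (\<lambda>y. \<alpha> * hom_ext f y + \<beta> * hom_ext g y)"
  by (simp add: fun_eq_iff hom_ext_def)

lemma hom_ext_mult_inner: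
  "hom_ext (\<lambda>z. (a \<bullet> z) * f z) y = (a \<bullet> y) * (inverse (norm y) * hom_ext f y)"
  by (simp add: hom_ext_def ac_simps)

lemma hom_ext_sph_lap:
  fixes f :: "real^'n::finite \<Rightarrow> real"
  assumes f: "smooth_on_sphere f" and y: "y \<noteq> 0"
  shows "hom_ext (sph_lap f) y = (y \<bullet> y) * eucl_lap (hom_ext f) y"
proof -
  have "hom_ext (sph_lap f) y = eucl_lap (hom_ext f) (y /\<^sub>R norm y)"
    by (simp add: hom_ext_def sph_lap_def)
  also have "\<dots> = inverse (norm y) powr (0 - 2) * eucl_lap (hom_ext f) y"
    using homogeneous_eucl_lap[OF smooth_on_sphereD[OF f] homogeneous_hom_ext] y
    by (rule homogeneous_normalize)
  also have "inverse (norm y) powr (0 - 2) = y \<bullet> y"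
    using y by (simp add: powr_minus power2_norm_eq_inner[symmetric] power_inverse)
  finally show ?thesis .
qed

lemma grad_deriv_eq_dirder:
  assumes f: "smooth_on_sphere f" and p: "norm p = 1"
  shows "grad_deriv a f p = dirder a (hom_ext f) p"
proof -
  have p0: "p \<noteq> 0" using p by auto
  have "dirder p (hom_ext f) p = 0"
    using homogeneous_euler[OF homogeneous_hom_ext p0 hom_ext_differentiable[OF f p0]] by simp
  then show ?thesis
    unfolding grad_deriv_def dirder_direction_diff[OF hom_ext_differentiable[OF f p0]] by simp
qed

lemma hom_ext_grad_deriv:
  fixes f :: "real^'n::finite \<Rightarrow> real"
  assumes f: "smooth_on_sphere f" and y: "y \<noteq> 0"
  shows "hom_ext (grad_deriv a f) y = norm y * dirder a (hom_ext f) y"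
proof -
  have "hom_ext (grad_deriv a f) y = grad_deriv a f (y /\<^sub>R norm y)"
    by (simp add: hom_ext_def)
  also have "\<dots> = dirder a (hom_ext f) (y /\<^sub>R norm y)"
    using f y by (simp add: grad_deriv_eq_dirder)
  also have "\<dots> = inverse (norm y) powr (0 - 1) * dirder a (hom_ext f) y"
    using homogeneous_dirder[OF homogeneous_hom_ext smooth_on_differentiable_on[OF smooth_on_sphereD[OF f]]] y
    by (rule homogeneous_normalize)
  finally show ?thesis using y by (simp add: powr_minus)
qed

lemma smooth_on_sphere_lincomb:
  "smooth_on_sphere f \<Longrightarrow> smooth_on_sphere g \<Longrightarrow> smooth_on_sphere (\<lambda>z. \<alpha> * f z + \<beta> * g z)"
  unfolding smooth_on_sphere_def hom_ext_lincomb
  by (intro smooth_on_add[OF open_punctured] smooth_on_cmult[OF open_punctured])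

lemma smooth_on_sphere_sph_lap: "smooth_on_sphere f \<Longrightarrow> smooth_on_sphere (sph_lap f)"
  unfolding smooth_on_sphere_def
  by (rule smooth_on_cong[OF smooth_on_mult[OF open_punctured smooth_on_self_inner
          smooth_on_eucl_lap[OF open_punctured]] open_punctured])
    (auto simp: hom_ext_sph_lap smooth_on_sphere_def)

lemma smooth_on_sphere_mult_inner: "smooth_on_sphere f \<Longrightarrow> smooth_on_sphere (\<lambda>z. (a \<bullet> z) * f z)"
  unfolding smooth_on_sphere_def hom_ext_mult_inner
  by (intro smooth_on_mult[OF open_punctured] smooth_on_inner smooth_on_inverse_norm[OF open_punctured])
    auto

lemma smooth_on_sphere_grad_deriv: "smooth_on_sphere f \<Longrightarrow> smooth_on_sphere (grad_deriv a f)"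
  unfolding smooth_on_sphere_def
  by (rule smooth_on_cong[OF smooth_on_mult[OF open_punctured
          smooth_on_norm[OF open_punctured] smooth_on_dirder] open_punctured])
    (auto simp: hom_ext_grad_deriv smooth_on_sphere_def)

lemma sph_lap_lincomb:
  assumes "smooth_on_sphere f" "smooth_on_sphere g" "p \<noteq> 0"
  shows "sph_lap (\<lambda>z. \<alpha> * f z + \<beta> * g z) p = \<alpha> * sph_lap f p + \<beta> * sph_lap g p"
  unfolding sph_lap_def hom_ext_lincomb
  by (rule eucl_lap_lincomb[OF open_punctured _ smooth_on_sphereD[OF assms(1)]
        smooth_on_sphereD[OF assms(2)]]) (use assms in simp)

lemma sph_lap_add:
  "smooth_on_sphere f \<Longrightarrow> smooth_on_sphere g \<Longrightarrow> p \<noteq> 0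
    \<Longrightarrow> sph_lap (\<lambda>z. f z + g z) p = sph_lap f p + sph_lap g p"
  using sph_lap_lincomb[of f g p 1 1] by simp

lemma grad_deriv_lincomb:
  assumes "smooth_on_sphere f" "smooth_on_sphere g" "p \<noteq> 0"
  shows "grad_deriv a (\<lambda>z. \<alpha> * f z + \<beta> * g z) p = \<alpha> * grad_deriv a f p + \<beta> * grad_deriv a g p"
  unfolding grad_deriv_def hom_ext_lincomb
  by (rule dirder_lincomb[OF hom_ext_differentiable hom_ext_differentiable]) (use assms in simp)+

lemma sph_lap_cong:
  assumes "\<And>y. norm y = 1 \<Longrightarrow> f y = g y" "p \<noteq> 0"
  shows "sph_lap f p = sph_lap g p"
  unfolding sph_lap_def
  by (rule eucl_lap_cong[OF open_punctured]) (use assms hom_ext_cong in auto)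

section \<open>Commutators with the first spherical harmonic and its gradient\<close>

lemma eucl_lap_inverse_norm_mult_hom_ext:
  fixes f :: "real^'n::finite \<Rightarrow> real"
  assumes f: "smooth_on_sphere f" and p: "norm p = 1"
  shows "eucl_lap (\<lambda>z. inverse (norm z) * hom_ext f z) p = sph_lap f p + (3 - real CARD('n)) * f p"
proof -
  let ?r = "\<lambda>z::real^'n. inverse (norm z)"
  have p0: "p \<noteq> 0" using p by auto
  have r: "smooth_on (- {0}) ?r" by (rule smooth_on_inverse_norm[OF open_punctured]) auto
  have "(\<Sum>i\<in>UNIV. dirder (axis i 1) ?r p * dirder (axis i 1) (hom_ext f) p)
      = - dirder p (hom_ext f) p"
    using p0 p
    by (simp add: dirder_inverse_norm dirder_basis_expansion[OF hom_ext_differentiable[OF f p0], of p]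
        sum_negf)
  also have "\<dots> = 0"
    using homogeneous_euler[OF homogeneous_hom_ext p0 hom_ext_differentiable[OF f p0]] by simp
  finally have cross: "(\<Sum>i\<in>UNIV. dirder (axis i 1) ?r p * dirder (axis i 1) (hom_ext f) p) = 0" .
  have "eucl_lap (\<lambda>z. ?r z * hom_ext f z) p = ?r p * eucl_lap (hom_ext f) p
      + 2 * (\<Sum>i\<in>UNIV. dirder (axis i 1) ?r p * dirder (axis i 1) (hom_ext f) p)
      + eucl_lap ?r p * hom_ext f p"
    using p0 by (intro eucl_lap_mult[OF open_punctured _ r smooth_on_sphereD[OF f]]) simp
  then show ?thesis
    using p by (simp add: cross eucl_lap_inverse_norm hom_ext_on_sphere sph_lap_def)
qed

lemma sph_lap_mult_inner:
  fixes f :: "real^'n::finite \<Rightarrow> real"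
  assumes f: "smooth_on_sphere f" and p: "norm p = 1"
  shows "sph_lap (\<lambda>z. (a \<bullet> z) * f z) p
    = (a \<bullet> p) * sph_lap f p - (real CARD('n) - 1) * (a \<bullet> p) * f p + 2 * grad_deriv a f p"
proof -
  define K where "K = (\<lambda>z::real^'n. inverse (norm z) * hom_ext f z)"
  have p0: "p \<noteq> 0" using p by auto
  have K: "smooth_on (- {0}) K"
    unfolding K_def using smooth_on_sphereD[OF f]
    by (intro smooth_on_mult[OF open_punctured] smooth_on_inverse_norm[OF open_punctured]) auto
  have "dirder a K p = dirder a (hom_ext f) p - (p \<bullet> a) * f p"
    unfolding K_def dirder_mult[OF differentiableI[OF has_derivative_inverse_norm[OF p0]]
        hom_ext_differentiable[OF f p0]]
    using p p0 by (simp add: dirder_inverse_norm hom_ext_on_sphere)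
  then have cross: "(\<Sum>i\<in>UNIV. dirder (axis i 1) (\<lambda>z. a \<bullet> z) p * dirder (axis i 1) K p)
      = grad_deriv a f p - (p \<bullet> a) * f p"
    using dirder_basis_expansion[OF smooth_on_differentiable[OF K open_punctured], of p a] p0
    by (simp add: dirder_inner grad_deriv_eq_dirder[OF f p])
  have "sph_lap (\<lambda>z. (a \<bullet> z) * f z) p = eucl_lap (\<lambda>z. (a \<bullet> z) * K z) p"
    unfolding sph_lap_def
    by (rule eucl_lap_cong[OF open_punctured]) (use p0 in \<open>simp_all add: hom_ext_mult_inner K_def\<close>)
  also have "\<dots> = (a \<bullet> p) * eucl_lap K p
      + 2 * (\<Sum>i\<in>UNIV. dirder (axis i 1) (\<lambda>z. a \<bullet> z) p * dirder (axis i 1) K p)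
      + eucl_lap (\<lambda>z. a \<bullet> z) p * K p"
    using p0 by (intro eucl_lap_mult[OF open_punctured _ smooth_on_inner K]) simp
  also have "eucl_lap K p = sph_lap f p + (3 - real CARD('n)) * f p"
    unfolding K_def by (rule eucl_lap_inverse_norm_mult_hom_ext[OF f p])
  also have "K p = f p"
    unfolding K_def using p by (simp add: hom_ext_on_sphere)
  finally show ?thesis
    unfolding cross eucl_lap_inner by (simp add: inner_commute algebra_simps)
qed

lemma grad_deriv_sph_lap:
  fixes f :: "real^'n::finite \<Rightarrow> real"
  assumes f: "smooth_on_sphere f" and p: "norm p = 1"
  shows "grad_deriv a (sph_lap f) p = dirder a (eucl_lap (hom_ext f)) p + 2 * (a \<bullet> p) * sph_lap f p"
proof -
  have p0: "p \<noteq> 0" using p by auto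
  have L: "eucl_lap (hom_ext f) differentiable (at p)"
    using smooth_on_differentiable[OF smooth_on_eucl_lap[OF open_punctured smooth_on_sphereD[OF f]]
        open_punctured] p0 by simp
  have "grad_deriv a (sph_lap f) p = dirder a (hom_ext (sph_lap f)) p"
    by (rule grad_deriv_eq_dirder[OF smooth_on_sphere_sph_lap[OF f] p])
  also have "\<dots> = dirder a (\<lambda>z. (z \<bullet> z) * eucl_lap (hom_ext f) z) p"
    by (rule dirder_cong[OF open_punctured]) (use f p0 in \<open>simp_all add: hom_ext_sph_lap\<close>)
  also have "\<dots> = dirder a (eucl_lap (hom_ext f)) p + 2 * (a \<bullet> p) * sph_lap f p"
    unfolding dirder_mult[OF differentiable_inner[OF differentiable_ident differentiable_ident] L]
      dirder_self_inner
    using p by (simp add: sph_lap_def inner_commute power2_norm_eq_inner[symmetric])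
  finally show ?thesis .
qed

lemma sph_lap_grad_deriv:
  fixes f :: "real^'n::finite \<Rightarrow> real"
  assumes f: "smooth_on_sphere f" and p: "norm p = 1"
  shows "sph_lap (grad_deriv a f) p
    = grad_deriv a (sph_lap f) p - 2 * (a \<bullet> p) * sph_lap f p + (real CARD('n) - 3) * grad_deriv a f p"
proof -
  define Q where "Q = dirder a (hom_ext f)"
  have p0: "p \<noteq> 0" using p by auto
  have Q: "smooth_on (- {0}) Q" unfolding Q_def by (rule smooth_on_dirder[OF smooth_on_sphereD[OF f]])
  have Q_diff: "Q differentiable (at p)" using smooth_on_differentiable[OF Q open_punctured] p0 by simp
  have "homogeneous (0 - 1) Q"
    unfolding Q_def
    by (rule homogeneous_dirder[OF homogeneous_hom_ext smooth_on_differentiable_on[OF smooth_on_sphereD[OF f]]])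
  then have cross: "(\<Sum>i\<in>UNIV. dirder (axis i 1) norm p * dirder (axis i 1) Q p) = - Q p"
    using homogeneous_euler[OF _ p0 Q_diff] dirder_basis_expansion[OF Q_diff, of p] p p0
    by (simp add: dirder_norm)
  have "sph_lap (grad_deriv a f) p = eucl_lap (\<lambda>z. norm z * Q z) p"
    unfolding sph_lap_def
    by (rule eucl_lap_cong[OF open_punctured]) (use f p0 in \<open>simp_all add: hom_ext_grad_deriv Q_def\<close>)
  also have "\<dots> = norm p * eucl_lap Q p
      + 2 * (\<Sum>i\<in>UNIV. dirder (axis i 1) norm p * dirder (axis i 1) Q p) + eucl_lap norm p * Q p"
    using p0 by (intro eucl_lap_mult[OF open_punctured _ smooth_on_norm[OF open_punctured] Q]) auto
  also have "eucl_lap Q p = dirder a (eucl_lap (hom_ext f)) p"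
    unfolding Q_def using p0
    by (intro eucl_lap_dirder_commute[OF open_punctured _ smooth_on_sphereD[OF f]]) simp
  also have "eucl_lap norm p = real CARD('n) - 1"
    by (rule eucl_lap_norm[OF p])
  moreover have "grad_deriv a f p = Q p"
    unfolding Q_def by (rule grad_deriv_eq_dirder[OF f p])
  ultimately show ?thesis
    using p unfolding cross grad_deriv_sph_lap[OF f p] by (simp add: algebra_simps)
qed

section \<open>The GJMS operators\<close>

lemma GJMS_Suc_lincomb:
  "GJMS n (Suc m) u = (\<lambda>p. (-1) * sph_lap (GJMS n m u) p
      + ((real n - 2 * real (Suc m)) * (real n + 2 * real (Suc m) - 2) / 4) * GJMS n m u p)"
  by (simp add: fun_eq_iff)

lemma smooth_on_sphere_GJMS: "smooth_on_sphere u \<Longrightarrow> smooth_on_sphere (GJMS n m u)"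
  by (induction m) (simp_all only: GJMS.simps(1) GJMS_Suc_lincomb smooth_on_sphere_lincomb
      smooth_on_sphere_sph_lap)

lemma GJMS_commutator_base:
  fixes a :: "real^'n::finite"
  assumes n: "CARD('n) = n + 1" and u: "smooth_on_sphere u" and p: "norm p = 1"
  shows "GJMS n 1 (\<lambda>y. (a \<bullet> y) * u y) p - (a \<bullet> p) * GJMS n 1 u p
    = (real n * (a \<bullet> p) * u p - 2 * grad_deriv a u p)"
  using sph_lap_mult_inner[OF u p, of a] n by (simp add: algebra_simps)

lemma sph_lap_commutators_lincomb:
  fixes a :: "real^'n::finite"
  assumes n: "CARD('n) = n + 1" and A: "smooth_on_sphere A" and B: "smooth_on_sphere B"
    and p: "norm p = 1"
  shows "sph_lap (\<lambda>y. (a \<bullet> y) * A y + (\<alpha> * ((a \<bullet> y) * B y) + \<beta> * grad_deriv a B y)) p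
      = ((a \<bullet> p) * sph_lap A p - real n * (a \<bullet> p) * A p + 2 * grad_deriv a A p)
      + (\<alpha> * ((a \<bullet> p) * sph_lap B p - real n * (a \<bullet> p) * B p + 2 * grad_deriv a B p)
      + \<beta> * (grad_deriv a (sph_lap B) p - 2 * (a \<bullet> p) * sph_lap B p
          + (real n - 2) * grad_deriv a B p))"
proof -
  have "p \<noteq> 0" using p by auto
  then have "sph_lap (\<lambda>y. (a \<bullet> y) * A y + (\<alpha> * ((a \<bullet> y) * B y) + \<beta> * grad_deriv a B y)) p
      = sph_lap (\<lambda>y. (a \<bullet> y) * A y) p
      + (\<alpha> * sph_lap (\<lambda>y. (a \<bullet> y) * B y) p + \<beta> * sph_lap (grad_deriv a B) p)"
    using A B
    by (simp add: sph_lap_add sph_lap_lincomb smooth_on_sphere_lincomb smooth_on_sphere_mult_inner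
        smooth_on_sphere_grad_deriv)
  then show ?thesis
    using n by (simp add: sph_lap_mult_inner[OF A p] sph_lap_mult_inner[OF B p] sph_lap_grad_deriv[OF B p])
qed

lemma GJMS_commutator_step:
  fixes a :: "real^'n::finite"
  assumes n: "CARD('n) = n + 1" and u: "smooth_on_sphere u" and k: "k \<ge> 1"
    and IH: "\<And>y. norm y = 1 \<Longrightarrow> GJMS n k (\<lambda>y. (a \<bullet> y) * u y) y - (a \<bullet> y) * GJMS n k u y
      = real k * ((real n + 2 * real k - 2) * (a \<bullet> y) * GJMS n (k - 1) u y
          - 2 * grad_deriv a (GJMS n (k - 1) u) y)"
    and p: "norm p = 1"
  shows "GJMS n (Suc k) (\<lambda>y. (a \<bullet> y) * u y) p - (a \<bullet> p) * GJMS n (Suc k) u p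
    = real (Suc k) * ((real n + 2 * real (Suc k) - 2) * (a \<bullet> p) * GJMS n k u p
        - 2 * grad_deriv a (GJMS n k u) p)"
proof -
  define A where "A = GJMS n k u"
  define B where "B = GJMS n (k - 1) u"
  define c where "c = (real n - 2 * real k) * (real n + 2 * real k - 2) / 4"
  define \<alpha> where "\<alpha> = real k * (real n + 2 * real k - 2)"
  define \<beta> where "\<beta> = - 2 * real k"
  have p0: "p \<noteq> 0" using p by auto
  have A: "smooth_on_sphere A" and B: "smooth_on_sphere B"
    unfolding A_def B_def using u by (simp_all add: smooth_on_sphere_GJMS)
  have A_eq: "A = (\<lambda>y. (-1) * sph_lap B y + c * B y)"
    using k unfolding A_def B_def c_def by (cases k) (simp_all only: GJMS_Suc_lincomb, simp_all)
  have "sph_lap (GJMS n k (\<lambda>y. (a \<bullet> y) * u y)) p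
      = sph_lap (\<lambda>y. (a \<bullet> y) * A y + (\<alpha> * ((a \<bullet> y) * B y) + \<beta> * grad_deriv a B y)) p"
    using IH p0 unfolding A_def B_def \<alpha>_def \<beta>_def by (intro sph_lap_cong) (simp_all add: algebra_simps)
  note lap = this[unfolded sph_lap_commutators_lincomb[OF n A B p]]
  have XA: "grad_deriv a A p = (-1) * grad_deriv a (sph_lap B) p + c * grad_deriv a B p"
    unfolding A_eq by (rule grad_deriv_lincomb[OF smooth_on_sphere_sph_lap[OF B] B p0])
  have Ap: "A p = (-1) * sph_lap B p + c * B p"
    unfolding A_eq ..
  have xu: "GJMS n k (\<lambda>y. (a \<bullet> y) * u y) p
      = (a \<bullet> p) * A p + \<alpha> * ((a \<bullet> p) * B p) + \<beta> * grad_deriv a B p"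
    using IH[OF p] unfolding A_def B_def \<alpha>_def \<beta>_def by (simp add: algebra_simps)
  show ?thesis
    unfolding GJMS.simps(2) lap xu A_def[symmetric] XA Ap
    unfolding \<alpha>_def \<beta>_def c_def using k by (simp add: field_simps)
qed

theorem corollary3p4:
  fixes n k :: nat and a :: "real^'n::finite" and u :: "real^'n \<Rightarrow> real"
  assumes "CARD('n) = n + 1" and "n \<ge> 2" and "k \<ge> 1"
    and "smooth_on_sphere u"
  shows "\<forall>p\<in>sphere 0 1.
    GJMS n k (\<lambda>y. (a \<bullet> y) * u y) p - (a \<bullet> p) * GJMS n k u p
    = real k * ((real n + 2 * real k - 2) * (a \<bullet> p) * GJMS n (k - 1) u p
                - 2 * grad_deriv a (GJMS n (k - 1) u) p)"
  using \<open>k \<ge> 1\<close>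
proof (induction k rule: nat_induct_at_least)
  case base
  then show ?case using GJMS_commutator_base[OF assms(1,4)] by simp
next
  case (Suc k)
  then show ?case using GJMS_commutator_step[OF assms(1,4), of k] by simp
qed

end
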